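(* Assume (a) and (b). For all $P\in\triangle_Q(\mathcal{M})$, $$G\big(z,P,P^{(Q,\lambda)}_{\Theta|Z=z}\big)=\lambda\int\Big(1-\frac{dP}{dP^{(Q,\lambda)}_{\Theta|Z=z}}(\theta)\Big)\Big(f\Big(\frac{dP^{(Q,\lambda)}_{\Theta|Z=z}}{dQ}(\theta)\Big)+f^*\Big(-\frac{L_z(\theta)+N_{Q,z}(\lambda)}{\lambda}\Big)\Big)dQ(\theta).$$
   Context: Setting. - $\mathcal{M}\subseteq\mathbb{R}^d$; $h:\mathcal{M}\times\mathcal{X}\to\mathcal{Y}$; the loss $\ell:\mathcal{Y}\times\mathcal{Y}\to[0,\infty)$ satisfies $\ell(y,y)=0$. - For a dataset $z=((x_1,y_1),\dots,(x_n,y_n))$, $L_z(\theta)=\frac1n\sum_i\ell(h(\theta,x_i),y_i)$ and $R_z(P)=\int L_z\,dP$. - $G(z,P_1,P_2)=R_z(P_1)-R_z(P_2)$. - $Q$ is a Borel probability measure on $\mathcal{M}$, and $\triangle_Q(\mathcal{M})$ is the set of Borel probability measures $P\ll Q$. Fix $\lambda>0$. - $f:[0,\infty)\to\mathbb{R}$ is convex with $f(1)=0$; $D_f(P\|Q)=\int f(\frac{dP}{dQ})dQ$. - $\dot f$ is the derivative of $f$ on $(0,\infty)$ and $\dot f^{-1}$ its inverse. - $f^*(t)=\sup_x(tx-f(x))$ is the Legendre–Fenchel transform. Assumptions. - (a) $f$ is strictly convex and differentiable. - (b) There exists $\beta$ with $\dot f^{-1}\big(-\frac{\beta+L_z(\theta)}{\lambda}\big)>0$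 on $\operatorname{supp}Q$ and $\int\dot f^{-1}\big(-\frac{\beta+L_z(\theta)}{\lambda}\big)dQ=1$. Normalization and solution. $N_{Q,z}(\lambda)$ denotes this $\beta$ (the normalization function). $P^{(Q,\lambda)}_{\Theta|Z=z}$ is the unique minimizer of $R_z(P)+\lambda D_f(P\|Q)$ over $\triangle_Q(\mathcal{M})$. It satisfies $\frac{dP^{(Q,\lambda)}_{\Theta|Z=z}}{dQ}(\theta)=\dot f^{-1}\big(-\frac{N_{Q,z}(\lambda)+L_z(\theta)}{\lambda}\big)$ for $\theta\in\operatorname{supp}Q$, and it is mutually absolutely continuous with $Q$. *)

theory Defs
  imports "HOL-Probability.Probability"
begin

definition strictly_convex_on :: "real set \<Rightarrow> (real \<Rightarrow> real) \<Rightarrow> bool" where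
  "strictly_convex_on S f \<longleftrightarrow> convex S \<and>
     (\<forall>x\<in>S. \<forall>y\<in>S. x \<noteq> y \<longrightarrow>
        (\<forall>t::real. 0 < t \<and> t < 1 \<longrightarrow> f ((1 - t) * x + t * y) < (1 - t) * f x + t * f y))"

definition emp_risk ::
  "('y \<Rightarrow> 'y \<Rightarrow> real) \<Rightarrow> ('m \<Rightarrow> 'x \<Rightarrow> 'y) \<Rightarrow> ('x \<times> 'y) list \<Rightarrow> 'm \<Rightarrow> real" where
  "emp_risk loss h z \<theta> = (\<Sum>(x, y) \<leftarrow> z. loss (h \<theta> x) y) / real (length z)"

definition exp_risk ::
  "('y \<Rightarrow> 'y \<Rightarrow> real) \<Rightarrow> ('m \<Rightarrow> 'x \<Rightarrow> 'y) \<Rightarrow> ('x \<times> 'y) list \<Rightarrow> 'm measure \<Rightarrow> real" where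
  "exp_risk loss h z P = integral\<^sup>L P (emp_risk loss h z)"

definition gap ::
  "('y \<Rightarrow> 'y \<Rightarrow> real) \<Rightarrow> ('m \<Rightarrow> 'x \<Rightarrow> 'y) \<Rightarrow> ('x \<times> 'y) list \<Rightarrow> 'm measure \<Rightarrow> 'm measure \<Rightarrow> real" where
  "gap loss h z P1 P2 = exp_risk loss h z P1 - exp_risk loss h z P2"

definition borel_prob_on :: "'a::topological_space set \<Rightarrow> 'a measure \<Rightarrow> bool" where
  "borel_prob_on M P \<longleftrightarrow> prob_space P \<and> sets P = sets (restrict_space borel M)"

definition ac_prob :: "'a::topological_space set \<Rightarrow> 'a measure \<Rightarrow> 'a measure set" where
  "ac_prob M Q = {P. borel_prob_on M P \<and> absolutely_continuous Q P}"

definition msupp :: "'a::topological_space set \<Rightarrow> 'a measure \<Rightarrow> 'a set" where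
  "msupp M Q = {\<theta> \<in> M. \<forall>U. open U \<and> \<theta> \<in> U \<longrightarrow> emeasure Q (U \<inter> M) > 0}"

definition fconj :: "(real \<Rightarrow> real) \<Rightarrow> real \<Rightarrow> real" where
  "fconj f t = (SUP x\<in>{0::real..}. t * x - f x)"

definition dinv :: "(real \<Rightarrow> real) \<Rightarrow> real \<Rightarrow> real" where
  "dinv f' y = the_inv_into {0<..} f' y"

definition gibbs_dens ::
  "(real \<Rightarrow> real) \<Rightarrow> real \<Rightarrow> real \<Rightarrow> ('m \<Rightarrow> real) \<Rightarrow> 'm \<Rightarrow> real" where
  "gibbs_dens f' lam N L \<theta> = dinv f' (- (N + L \<theta>) / lam)"

definition gibbs ::
  "'m measure \<Rightarrow> (real \<Rightarrow> real) \<Rightarrow> real \<Rightarrow> real \<Rightarrow> ('m \<Rightarrow> real) \<Rightarrow> 'm measure" where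
  "gibbs Q f' lam N L = density Q (\<lambda>\<theta>. ennreal (gibbs_dens f' lam N L \<theta>))"

end

theory Submission
  imports Defs
begin

(* Write P' for the Gibbs measure, g = dP'/dQ and t = -(L_z + N)/lambda. On the support of Q,
   which has full measure, f'(g) = t, so the Fenchel-Young inequality f(g) + f^*(t) >= t g is an
   equality there. Since dP/dQ = g dP/dP', the integrand becomes t g - t dP/dQ, whose Q-integral
   is (R_z(P) - R_z(P'))/lambda: the constant N contributes equally to both terms because P and
   P' are probability measures. *)

lemma strictly_convex_onD:
  assumes "strictly_convex_on S f" "x \<in> S" "y \<in> S" "x \<noteq> y" "0 < t" "t < 1"
  shows "f ((1 - t) * x + t * y) < (1 - t) * f x + t * f y"
  using assms unfolding strictly_convex_on_def by blast

lemma strictly_convex_on_imp_convex_on: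
  assumes "strictly_convex_on S f"
  shows "convex_on S f"
proof (rule convex_onI)
  show "convex S" using assms unfolding strictly_convex_on_def by blast
  fix t :: real and x y assume "0 < t" "t < 1" "x \<in> S" "y \<in> S"
  show "f ((1 - t) *\<^sub>R x + t *\<^sub>R y) \<le> (1 - t) * f x + t * f y"
  proof (cases "x = y")
    case False
    then show ?thesis
      using strictly_convex_onD[OF assms \<open>x \<in> S\<close> \<open>y \<in> S\<close> _ \<open>0 < t\<close> \<open>t < 1\<close>] by simp
  qed (simp add: algebra_simps)
qed

lemma strictly_convex_on_deriv_inj:
  assumes strict: "strictly_convex_on S f"
    and deriv: "\<And>x. x \<in> interior S \<Longrightarrow> (f has_real_derivative f' x) (at x)"
  shows "inj_on f' (interior S)"
proof (rule inj_onI, rule ccontr)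
  fix a b assume a: "a \<in> interior S" and b: "b \<in> interior S" and eq: "f' a = f' b" and "a \<noteq> b"
  have "convex S"
    using strict unfolding strictly_convex_on_def by blast
  have tangent: "f x - f c \<ge> f' c * (x - c)" if "c \<in> interior S" "x \<in> S" for c x
    using convex_on_imp_above_tangent[OF strictly_convex_on_imp_convex_on[OF strict]
        convex_connected[OF \<open>convex S\<close>] that] deriv[OF that(1)]
    by (auto intro: has_field_derivative_at_within)
  \<comment> \<open>Equal slopes at \<open>a\<close> and \<open>b\<close> put the midpoint on or above the chord.\<close>
  define m where "m = (a + b) / 2"
  have "a \<in> S" "b \<in> S"
    using a b interior_subset by blast+
  then have "m \<in> S"
    using convexD[OF \<open>convex S\<close>, of a b "1/2" "1/2"] by (simp add: m_def add_divide_distrib)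
  have chord: "f b - f a = f' a * (b - a)"
    using tangent[OF a \<open>b \<in> S\<close>] tangent[OF b \<open>a \<in> S\<close>] eq by (simp add: algebra_simps)
  have "m - a = (b - a) / 2"
    by (simp add: m_def field_simps)
  then have "f' a * (m - a) = (f b - f a) / 2"
    using chord by simp
  then have above: "(f b - f a) / 2 \<le> f m - f a"
    using tangent[OF a \<open>m \<in> S\<close>] by simp
  have "f ((1 - 1/2) * a + 1/2 * b) < (1 - 1/2) * f a + 1/2 * f b"
    by (rule strictly_convex_onD[OF strict \<open>a \<in> S\<close> \<open>b \<in> S\<close> \<open>a \<noteq> b\<close>]) auto
  then have "f m < (f a + f b) / 2"
    by (simp add: m_def add_divide_distrib)
  with above show False by simp
qed

lemma fenchel_young_eq:
  assumes convex: "convex_on {0..} f" and "0 < c"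
    and deriv: "(f has_real_derivative d) (at c)"
  shows "f c + fconj f d = d * c"
proof -
  have "fconj f d = d * c - f c"
    unfolding fconj_def
  proof (rule cSup_eq_maximum)
    show "d * c - f c \<in> (\<lambda>x. d * x - f x) ` {0..}"
      using \<open>0 < c\<close> by force
    fix y assume "y \<in> (\<lambda>x. d * x - f x) ` {0..}"
    then obtain x where "0 \<le> x" and y: "y = d * x - f x" by auto
    have "d * (x - c) \<le> f x - f c"
      using convex_on_imp_above_tangent[OF convex, of c x] \<open>0 < c\<close> \<open>0 \<le> x\<close> deriv
      by (auto intro: has_field_derivative_at_within convex_connected)
    then show "y \<le> d * c - f c"
      unfolding y by (simp add: algebra_simps)
  qed
  then show ?thesis
    by simp
qed

lemma borel_measurable_fconj[measurable]: "fconj f \<in> borel_measurable borel"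
proof -
  define D where "D = {t. bdd_above ((\<lambda>x. t * x - f x) ` {0..})}"
  have "s \<in> D" if "t \<in> D" "s \<le> t" for s t
  proof -
    obtain B where B: "\<And>x. 0 \<le> x \<Longrightarrow> t * x - f x \<le> B"
      using \<open>t \<in> D\<close> unfolding D_def bdd_above_def by auto
    have "s * x - f x \<le> B" if "0 \<le> x" for x
      using B[OF that] mult_right_mono[OF \<open>s \<le> t\<close> that] by simp
    then show ?thesis
      unfolding D_def bdd_above_def by auto
  qed
  then have "is_interval D"
    unfolding is_interval_1 by blast
  have mono: "mono_on D (fconj f)"
  proof (rule mono_onI)
    fix s t assume "s \<in> D" "t \<in> D" "s \<le> t"
    then show "fconj f s \<le> fconj f t"
      unfolding fconj_def D_def by (auto intro!: cSUP_mono bexI mult_right_mono)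
  qed
  \<comment> \<open>Off \<open>D\<close> the supremum is taken over a set unbounded above, where \<open>Sup\<close> is a junk constant.\<close>
  have "fconj f t = (LEAST z. False)" if "t \<notin> D" for t
  proof -
    have "(\<lambda>z. \<forall>x\<in>{0..}. t * x - f x \<le> z) = (\<lambda>z. False)"
      using that unfolding D_def bdd_above_def by (intro ext) auto
    then show ?thesis
      unfolding fconj_def Sup_real_def by simp
  qed
  then have "fconj f = (\<lambda>t. if t \<in> D then fconj f t else (LEAST z. False))"
    by auto
  also have "\<dots> \<in> borel_measurable borel"
    using real_interval_borel_measurable[OF \<open>is_interval D\<close>] borel_measurable_mono_on_fnc[OF mono]
    by (subst measurable_If_restrict_space_iff) auto
  finally show ?thesis .
qed

lemma borel_measurable_continuous_on_pos_compose:
  fixes f :: "real \<Rightarrow> real"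
  assumes "continuous_on {0<..} f" and X: "X \<in> borel_measurable M" and "\<And>x. 0 \<le> X x"
  shows "(\<lambda>x. f (X x)) \<in> borel_measurable M"
proof -
  have "(\<lambda>x. if x \<in> {0<..} then f x else f 0) \<in> borel_measurable borel"
    using assms(1) by (intro borel_measurable_continuous_on_if) auto
  then have "(\<lambda>x. if X x \<in> {0<..} then f (X x) else f 0) \<in> borel_measurable M"
    using measurable_compose[OF X] by blast
  moreover have "(if X x \<in> {0<..} then f (X x) else f 0) = f (X x)" for x
    using \<open>0 \<le> X x\<close> by auto
  ultimately show ?thesis
    by simp
qed

lemma AE_in_msupp:
  fixes M :: "'a::second_countable_topology set"
  assumes sets_Q: "sets Q = sets (restrict_space borel M)"
  shows "AE \<theta> in Q. \<theta> \<in> msupp M Q"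
proof -
  have space_Q: "space Q = M"
    using sets_eq_imp_space_eq[OF sets_Q] by (simp add: space_restrict_space)
  \<comment> \<open>The complement of the support is covered by \<open>Q\<close>-null open sets; countably many suffice.\<close>
  define \<U> where "\<U> = {U. open U \<and> emeasure Q (U \<inter> M) = 0}"
  obtain \<F> where \<F>: "\<F> \<subseteq> \<U>" "countable \<F>" "\<Union>\<F> = \<Union>\<U>"
    using Lindelof[of \<U>] unfolding \<U>_def by blast
  have "(\<Union>U\<in>\<F>. U \<inter> M) \<in> null_sets Q"
  proof (rule null_sets_UN')
    fix U assume "U \<in> \<F>"
    then have "open U" "emeasure Q (U \<inter> M) = 0"
      using \<F>(1) unfolding \<U>_def by auto
    moreover have "U \<inter> M \<in> sets Q"
      unfolding sets_Q sets_restrict_space Int_commute[of U M] using \<open>open U\<close> by (intro imageI) simp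
    ultimately show "U \<inter> M \<in> null_sets Q"
      by (simp add: null_sets_def)
  qed (rule \<F>(2))
  moreover have "{\<theta> \<in> space Q. \<theta> \<notin> msupp M Q} \<subseteq> (\<Union>U\<in>\<F>. U \<inter> M)"
  proof (rule subsetI)
    fix \<theta> assume "\<theta> \<in> {\<theta> \<in> space Q. \<theta> \<notin> msupp M Q}"
    then have "\<theta> \<in> M" "\<theta> \<notin> msupp M Q"
      unfolding space_Q by simp_all
    then obtain U where "open U" "\<theta> \<in> U" "\<not> 0 < emeasure Q (U \<inter> M)"
      unfolding msupp_def by blast
    then have "U \<in> \<U>"
      unfolding \<U>_def by (simp add: not_gr_zero)
    then show "\<theta> \<in> (\<Union>U\<in>\<F>. U \<inter> M)"
      using \<F>(3) \<open>\<theta> \<in> U\<close> \<open>\<theta> \<in> M\<close> by blast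
  qed
  ultimately show ?thesis
    by (rule AE_I')
qed

lemma AE_gibbs_dens_fenchel_young:
  fixes M :: "'a::second_countable_topology set"
  assumes "sets Q = sets (restrict_space borel M)"
    and "strictly_convex_on {0..} f" and "\<And>x. 0 < x \<Longrightarrow> (f has_real_derivative f' x) (at x)"
    and "\<forall>\<theta>\<in>msupp M Q. - (N + L \<theta>) / lam \<in> f' ` {0<..} \<and> dinv f' (- (N + L \<theta>) / lam) > 0"
  shows "AE \<theta> in Q. 0 < gibbs_dens f' lam N L \<theta> \<and>
    f (gibbs_dens f' lam N L \<theta>) + fconj f (- (L \<theta> + N) / lam) = - (L \<theta> + N) / lam * gibbs_dens f' lam N L \<theta>"
  using AE_in_msupp[OF assms(1)]
proof eventually_elim
  case (elim \<theta>)
  have "inj_on f' {0<..}"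
    using strictly_convex_on_deriv_inj[OF assms(2)] assms(3) by simp
  then have "0 < gibbs_dens f' lam N L \<theta>" and "f' (gibbs_dens f' lam N L \<theta>) = - (L \<theta> + N) / lam"
    using assms(4) elim by (auto simp: gibbs_dens_def dinv_def f_the_inv_into_f add.commute)
  then show ?case
    using fenchel_young_eq[OF strictly_convex_on_imp_convex_on[OF assms(2)] _ assms(3)] by metis
qed

lemma (in sigma_finite_measure) RN_deriv_chain:
  assumes "sigma_finite_measure N" "absolutely_continuous M N" "sets N = sets M"
    and "absolutely_continuous N K" "sets K = sets N"
  shows "AE x in M. RN_deriv M N x * RN_deriv N K x = RN_deriv M K x"
proof (rule RN_deriv_unique)
  interpret N: sigma_finite_measure N by fact
  have [measurable]: "RN_deriv N K \<in> borel_measurable M"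
    by (subst measurable_cong_sets[OF \<open>sets N = sets M\<close>[symmetric] refl]) simp
  show "(\<lambda>x. RN_deriv M N x * RN_deriv N K x) \<in> borel_measurable M"
    by measurable
  have "K = density N (RN_deriv N K)"
    using N.density_RN_deriv assms(4,5) by simp
  also have "\<dots> = density (density M (RN_deriv M N)) (RN_deriv N K)"
    using density_RN_deriv assms(2,3) by simp
  also have "\<dots> = density M (\<lambda>x. RN_deriv M N x * RN_deriv N K x)"
    by (rule density_density_eq) auto
  finally show "density M (\<lambda>x. RN_deriv M N x * RN_deriv N K x) = K" ..
qed

lemma (in sigma_finite_measure) positive_prob_density:
  fixes g :: "'a \<Rightarrow> real"
  assumes "integrable M g" "AE x in M. 0 < g x" "integral\<^sup>L M g = 1"
  defines "G \<equiv> density M (\<lambda>x. ennreal (g x))"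
  shows "prob_space G" and "sets G = sets M"
    and "absolutely_continuous M G" and "absolutely_continuous G M"
    and "AE x in M. enn2real (RN_deriv M G x) = g x"
proof -
  have [measurable]: "g \<in> borel_measurable M"
    using assms(1) by auto
  have g_nonneg: "AE x in M. 0 \<le> g x"
    using assms(2) by eventually_elim simp
  then show "prob_space G"
    unfolding G_def using assms by (intro prob_spaceI) (simp add: emeasure_density nn_integral_eq_integral)
  show "sets G = sets M" and "absolutely_continuous M G"
    unfolding G_def by (auto intro!: absolutely_continuousI_density)
  show "absolutely_continuous G M"
    unfolding absolutely_continuous_def
  proof
    fix A assume "A \<in> null_sets G"
    then have "A \<in> sets M" "AE x in M. x \<notin> A"
      unfolding G_def using assms(2) null_sets_density_iff[of "\<lambda>x. ennreal (g x)" M A]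
      by (auto elim: AE_mp)
    then show "A \<in> null_sets M"
      by (simp add: AE_iff_null_sets)
  qed
  have "AE x in M. ennreal (g x) = RN_deriv M G x"
    unfolding G_def by (intro RN_deriv_unique) auto
  with g_nonneg show "AE x in M. enn2real (RN_deriv M G x) = g x"
    by eventually_elim (metis enn2real_ennreal)
qed

lemma (in sigma_finite_measure) RN_deriv_integral_affine:
  fixes L :: "'a \<Rightarrow> real"
  assumes "prob_space N" "absolutely_continuous M N" "sets N = sets M" "integrable N L"
  shows "integrable M (\<lambda>x. enn2real (RN_deriv M N x) * (- (L x + c) / lam))"
    and "(\<integral>x. enn2real (RN_deriv M N x) * (- (L x + c) / lam) \<partial>M) = - (integral\<^sup>L N L + c) / lam"
proof -
  interpret N: prob_space N by fact
  have [measurable]: "L \<in> borel_measurable M"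
    using assms(3,4) measurable_cong_sets[OF assms(3) refl] by auto
  have "integrable N (\<lambda>x. - (L x + c) / lam)"
    using assms(4) by (intro integrable_divide_zero integrable_minus) simp
  moreover have "(\<integral>x. - (L x + c) / lam \<partial>N) = - (integral\<^sup>L N L + c) / lam"
    using assms(4) by (simp add: N.prob_space)
  ultimately show "integrable M (\<lambda>x. enn2real (RN_deriv M N x) * (- (L x + c) / lam))"
    and "(\<integral>x. enn2real (RN_deriv M N x) * (- (L x + c) / lam) \<partial>M) = - (integral\<^sup>L N L + c) / lam"
    using RN_deriv_integrable[OF prob_space_imp_sigma_finite[OF assms(1)] assms(2,3)]
      RN_deriv_integral[OF prob_space_imp_sigma_finite[OF assms(1)] assms(2,3)]
    by simp_all
qed

lemma integral_diff_eq_RN_deriv_integral: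
  fixes L \<phi> :: "'a \<Rightarrow> real"
  assumes "sigma_finite_measure Q" "prob_space P" "prob_space P'"
    and sets_P: "sets P = sets Q" and sets_P': "sets P' = sets Q"
    and ac_Q_P': "absolutely_continuous Q P'" and ac_P'_P: "absolutely_continuous P' P"
    and int_P: "integrable P L" and int_P': "integrable P' L"
    and [measurable]: "\<phi> \<in> borel_measurable Q"
    and \<phi>: "AE x in Q. \<phi> x = - (L x + c) / lam * enn2real (RN_deriv Q P' x)"
    and "lam \<noteq> 0"
  shows "integral\<^sup>L P L - integral\<^sup>L P' L
    = lam * (\<integral>x. (1 - enn2real (RN_deriv P' P x)) * \<phi> x \<partial>Q)"
proof -
  interpret Q: sigma_finite_measure Q by fact
  define t where "t x = - (L x + c) / lam" for x
  define p where "p x = enn2real (RN_deriv Q P x)" for x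
  define p' where "p' x = enn2real (RN_deriv Q P' x)" for x
  have ac_Q_P: "absolutely_continuous Q P"
    using ac_Q_P' ac_P'_P unfolding absolutely_continuous_def by blast
  have [measurable]: "L \<in> borel_measurable Q"
    using int_P measurable_cong_sets[OF sets_P refl] by auto
  have [measurable]: "RN_deriv P' P \<in> borel_measurable Q"
    by (subst measurable_cong_sets[OF sets_P'[symmetric] refl]) simp
  have "AE x in Q. RN_deriv Q P' x * RN_deriv P' P x = RN_deriv Q P x"
    using sets_P sets_P' \<open>prob_space P'\<close>
    by (intro Q.RN_deriv_chain prob_space_imp_sigma_finite ac_Q_P' ac_P'_P) auto
  then have integrand: "AE x in Q. (1 - enn2real (RN_deriv P' P x)) * \<phi> x = p' x * t x - p x * t x"
    using \<phi>
  proof eventually_elim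
    case (elim x)
    have "\<phi> x = t x * p' x"
      using elim(2) by (simp add: t_def p'_def)
    then have "(1 - enn2real (RN_deriv P' P x)) * \<phi> x
        = p' x * t x - (p' x * enn2real (RN_deriv P' P x)) * t x"
      by (simp add: algebra_simps)
    also have "p' x * enn2real (RN_deriv P' P x) = p x"
      using elim(1) by (simp add: p_def p'_def enn2real_mult[symmetric])
    finally show ?case .
  qed
  have "(\<integral>x. (1 - enn2real (RN_deriv P' P x)) * \<phi> x \<partial>Q) = (\<integral>x. p' x * t x - p x * t x \<partial>Q)"
    by (rule integral_cong_AE[OF _ _ integrand]) (unfold p_def p'_def t_def, measurable)
  also have "\<dots> = (integral\<^sup>L P L - integral\<^sup>L P' L) / lam"
    using Q.RN_deriv_integral_affine[OF \<open>prob_space P\<close> ac_Q_P sets_P int_P]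
      Q.RN_deriv_integral_affine[OF \<open>prob_space P'\<close> ac_Q_P' sets_P' int_P']
    unfolding p_def p'_def t_def by (simp add: diff_divide_distrib)
  finally show ?thesis
    using \<open>lam \<noteq> 0\<close> by simp
qed

theorem theorem4:
  fixes M :: "'a::euclidean_space set"
    and Q :: "'a measure"
    and h :: "'a \<Rightarrow> 'x \<Rightarrow> 'y"
    and loss :: "'y \<Rightarrow> 'y \<Rightarrow> real"
    and z :: "('x \<times> 'y) list"
    and f f' :: "real \<Rightarrow> real"
    and lam \<beta> :: real
    and P :: "'a measure"
  assumes loss_nonneg: "\<And>y y'. loss y y' \<ge> 0"
    and loss_diag: "\<And>y. loss y y = 0"
    and Q: "borel_prob_on M Q"
    and lam: "lam > 0"
    and f_convex: "convex_on {0..} f"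
    and f1: "f 1 = 0"
    \<comment> \<open>Assumption (a)\<close>
    and f_strict: "strictly_convex_on {0..} f"
    and f_deriv: "\<And>x. x > 0 \<Longrightarrow> (f has_real_derivative f' x) (at x)"
    \<comment> \<open>Assumption (b), with beta = N_{Q,z}(lambda)\<close>
    and b_pos: "\<forall>\<theta>\<in>msupp M Q. - (\<beta> + emp_risk loss h z \<theta>) / lam \<in> f' ` {0<..}
                   \<and> dinv f' (- (\<beta> + emp_risk loss h z \<theta>) / lam) > 0"
    and b_int: "integral\<^sup>L Q (\<lambda>\<theta>. dinv f' (- (\<beta> + emp_risk loss h z \<theta>) / lam)) = 1"
    \<comment> \<open>P in the set of Borel probability measures absolutely continuous w.r.t. Q\<close>
    and P: "P \<in> ac_prob M Q"
    \<comment> \<open>finiteness of the risks R_z(P) and R_z(P*) appearing in G\<close>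
    and intP: "integrable P (emp_risk loss h z)"
    and intPs: "integrable (gibbs Q f' lam \<beta> (emp_risk loss h z)) (emp_risk loss h z)"
  shows "gap loss h z P (gibbs Q f' lam \<beta> (emp_risk loss h z)) =
    lam * integral\<^sup>L Q (\<lambda>\<theta>.
      (1 - enn2real (RN_deriv (gibbs Q f' lam \<beta> (emp_risk loss h z)) P \<theta>)) *
      (f (enn2real (RN_deriv Q (gibbs Q f' lam \<beta> (emp_risk loss h z)) \<theta>)) +
       fconj f (- (emp_risk loss h z \<theta> + \<beta>) / lam)))"
proof -
  define L where "L = emp_risk loss h z"
  define g where "g = gibbs_dens f' lam \<beta> L"
  define Ps where "Ps = gibbs Q f' lam \<beta> L"
  have "prob_space Q" and sets_Q: "sets Q = sets (restrict_space borel M)"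
    and "prob_space P" and sets_P: "sets P = sets Q" and "absolutely_continuous Q P"
    using Q P unfolding ac_prob_def borel_prob_on_def by auto
  interpret Q: prob_space Q by fact
  have g: "AE \<theta> in Q. 0 < g \<theta> \<and> f (g \<theta>) + fconj f (- (L \<theta> + \<beta>) / lam) = - (L \<theta> + \<beta>) / lam * g \<theta>"
    using AE_gibbs_dens_fenchel_young[OF sets_Q f_strict f_deriv b_pos] unfolding g_def L_def .
  then have "AE \<theta> in Q. 0 < g \<theta>"
    by eventually_elim simp
  moreover have "integrable Q g" and "integral\<^sup>L Q g = 1"
    using b_int not_integrable_integral_eq unfolding g_def gibbs_dens_def L_def by fastforce+
  ultimately have Ps: "prob_space Ps" "sets Ps = sets Q" "absolutely_continuous Q Ps"
    "absolutely_continuous Ps Q" "AE \<theta> in Q. enn2real (RN_deriv Q Ps \<theta>) = g \<theta>"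
    unfolding Ps_def gibbs_def g_def[symmetric] by (simp_all add: Q.positive_prob_density)
  from Ps(4) \<open>absolutely_continuous Q P\<close> have "absolutely_continuous Ps P"
    unfolding absolutely_continuous_def by blast
  from Ps(5) g have fenchel: "AE \<theta> in Q. f (enn2real (RN_deriv Q Ps \<theta>)) + fconj f (- (L \<theta> + \<beta>) / lam)
      = - (L \<theta> + \<beta>) / lam * enn2real (RN_deriv Q Ps \<theta>)"
    by eventually_elim simp
  have "continuous_on {0<..} f"
    using f_deriv by (intro continuous_at_imp_continuous_on ballI DERIV_isCont) auto
  then have [measurable]: "(\<lambda>\<theta>. f (enn2real (RN_deriv Q Ps \<theta>))) \<in> borel_measurable Q"
    by (rule borel_measurable_continuous_on_pos_compose) auto
  have [measurable]: "L \<in> borel_measurable Q"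
    using intP measurable_cong_sets[OF sets_P refl] unfolding L_def by auto
  have "(\<lambda>\<theta>. f (enn2real (RN_deriv Q Ps \<theta>)) + fconj f (- (L \<theta> + \<beta>) / lam)) \<in> borel_measurable Q"
    by measurable
  then show ?thesis
    using integral_diff_eq_RN_deriv_integral[OF Q.sigma_finite_measure_axioms \<open>prob_space P\<close>
        Ps(1) sets_P Ps(2,3) \<open>absolutely_continuous Ps P\<close> _ _ _ fenchel] intP intPs lam
    unfolding gap_def exp_risk_def L_def[symmetric] Ps_def[symmetric] by simp
qed

end
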